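(* Let $P\ge 1$, $U\ge 0$ and $L$ be integers with $L\leq -\frac{U+1}{2}$, and let $B_{\mathrm{OFL}}:=(1-2^{-P})\,2^{U+1}$. Then for every real $\nu\geq 0$ and every real $z$ with $0<z\leq B_{\mathrm{OFL}}$, the exponentially scaled function satisfies $\tilde K_\nu(z)\geq 2^{L}$ (i.e. $\tilde K_\nu(z)$ does not underflow the smallest positive normal floating-point number $2^L$). *)

theory Defs
  imports "HOL-Analysis.Analysis"
begin

text \<open>Modified Bessel function of the second kind of real order nu, for z > 0,
  via the standard integral representation (DLMF 10.32.9):
  K_nu(z) = integral from 0 to infinity of exp(-z cosh t) cosh(nu t) dt.\<close>
definition besselK :: "real \<Rightarrow> real \<Rightarrow> real" where
  "besselK \<nu> z = integral {0..} (\<lambda>t. exp (- z * cosh t) * cosh (\<nu> * t))"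

definition besselK_scaled :: "real \<Rightarrow> real \<Rightarrow> real" where
  "besselK_scaled \<nu> z = exp z * besselK \<nu> z"

end

theory Submission
  imports Defs
begin

text \<open>Since \<open>cosh (\<nu> t) \<ge> 1\<close>, \<open>K\<^sub>\<nu>(z) e\<^sup>z\<close> is at least \<open>\<integral>\<^sub>0\<^sup>\<infinity> exp (- z (cosh t - 1)) dt\<close>,
  which decreases in \<open>z\<close>; so it suffices to show that this integral is at least \<open>1 / \<surd>B\<close>
  for \<open>z \<le> B = 2\<^sup>U\<^sup>+\<^sup>1\<close>, and \<open>2\<^sup>L \<le> 1 / \<surd>B\<close> by the hypothesis on \<open>L\<close>.
  Substituting \<open>x = \<surd>B t\<close>, for \<open>x \<le> 7/5\<close> we get \<open>t \<le> 1\<close> and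
  \<open>B (cosh t - 1) \<le> x\<^sup>2/2 + x\<^sup>4/16\<close> (using \<open>B \<ge> 2\<close>). Bounding \<open>exp (- w)\<close> below by its
  cubic Taylor polynomial, which is decreasing, gives a polynomial minorant in \<open>x\<close>
  whose integral over \<open>[0, 7/5]\<close> exceeds \<open>1\<close>.\<close>

definition exp_neg_taylor3 :: "real \<Rightarrow> real" where
  "exp_neg_taylor3 w = 1 - w + w^2/2 - w^3/6"

lemma exp_neg_taylor3_le_exp:
  fixes w :: real assumes "0 \<le> w"
  shows "exp_neg_taylor3 w \<le> exp (- w)"
proof -
  obtain s where s: "exp (- w) = (\<Sum>m<4. (- w) ^ m / fact m) + exp s / fact 4 * (- w) ^ 4"
    using Maclaurin_exp_le[of "- w" 4] by blast
  have "(\<Sum>m<4. (- w) ^ m / fact m) = exp_neg_taylor3 w"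
    by (simp add: exp_neg_taylor3_def eval_nat_numeral fact_numeral)
  moreover have "0 \<le> exp s / fact 4 * (- w) ^ 4" by simp
  ultimately show ?thesis using s by linarith
qed

lemma exp_neg_taylor3_antimono:
  fixes v w :: real assumes "v \<le> w"
  shows "exp_neg_taylor3 w \<le> exp_neg_taylor3 v"
proof -
  have "exp_neg_taylor3 v - exp_neg_taylor3 w
        = (w - v) * (((v - w)^2/4 + 3 * (v + w - 2)^2/4 + 3) / 6)"
    by (simp add: exp_neg_taylor3_def field_simps power2_eq_square power3_eq_cube)
  also have "\<dots> \<ge> 0" using assms by simp
  finally show ?thesis by simp
qed

lemma cosh_minus_one_le:
  fixes h :: real assumes "\<bar>h\<bar> \<le> 1"
  shows "cosh h - 1 \<le> h^2/2 + h^4/8"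
proof -
  obtain s where s: "\<bar>s\<bar> \<le> \<bar>h\<bar>" "exp h = (\<Sum>m<4. h ^ m / fact m) + exp s / fact 4 * h ^ 4"
    using Maclaurin_exp_le[of h 4] by blast
  obtain s' where s': "\<bar>s'\<bar> \<le> \<bar>- h\<bar>"
    "exp (- h) = (\<Sum>m<4. (- h) ^ m / fact m) + exp s' / fact 4 * (- h) ^ 4"
    using Maclaurin_exp_le[of "- h" 4] by blast
  have "exp s \<le> exp 1" "exp s' \<le> exp 1" using s(1) s'(1) assms by simp_all
  then have "exp s \<le> 3" "exp s' \<le> 3" using e_less_272 by linarith+
  moreover have "cosh h = 1 + h^2/2 + (exp s + exp s') / 48 * h^4"
    using s(2) s'(2) by (simp add: cosh_def eval_nat_numeral fact_numeral field_simps)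
  ultimately show ?thesis
    using mult_right_mono[of "(exp s + exp s') / 48" "6/48" "h^4"] by simp
qed

lemma besselK_integrand_integrable:
  fixes z \<nu> :: real assumes "0 < z" "0 \<le> \<nu>"
  shows "(\<lambda>t. exp (- z * cosh t) * cosh (\<nu> * t)) integrable_on {0..}"
proof (rule measurable_bounded_by_integrable_imp_integrable_real)
  show "(\<lambda>t. exp (- z * cosh t) * cosh (\<nu> * t)) \<in> borel_measurable (lebesgue_on {0..})"
    by (intro continuous_imp_measurable_on_sets_lebesgue continuous_intros) auto
  show "(\<lambda>t. exp ((\<nu> + 1)^2 / z) * exp (- 1 * t)) integrable_on {0..}"
    by (intro integrable_on_mult_right integrable_on_exp_minus_to_infinity) auto
  fix t :: real assume "t \<in> {0..}"
  then have t: "0 \<le> t" by simp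
  \<comment> \<open>\<open>cosh t \<ge> e\<^sup>t/2 \<ge> t\<^sup>2/4\<close>, and \<open>(\<nu>+1) t \<le> z t\<^sup>2/4 + (\<nu>+1)\<^sup>2/z\<close> by AM-GM\<close>
  have "t^2/2 \<le> exp t"
    using exp_lower_Taylor_quadratic[of t] t by (smt (verit) zero_le_power2)
  moreover have "exp t / 2 \<le> cosh t" by (simp add: cosh_def)
  ultimately have "z * (t^2/4) \<le> z * cosh t"
    using assms(1) by (intro mult_left_mono) auto
  moreover have "z * (t^2/4) + (\<nu> + 1)^2 / z - (\<nu> + 1) * t = (z * t / 2 - (\<nu> + 1))^2 / z"
    using assms(1) by (simp add: field_simps power2_eq_square)
  moreover have "0 \<le> (z * t / 2 - (\<nu> + 1))^2 / z" using assms(1) by simp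
  ultimately have "- z * cosh t + \<nu> * t \<le> (\<nu> + 1)^2 / z + - 1 * t"
    by (simp add: algebra_simps)
  moreover have "cosh (\<nu> * t) \<le> exp (\<nu> * t)"
    using assms(2) t by (simp add: cosh_def)
  ultimately have "exp (- z * cosh t) * cosh (\<nu> * t) \<le> exp ((\<nu> + 1)^2 / z + - 1 * t)"
    by (smt (verit) exp_add exp_le_cancel_iff exp_gt_zero mult_left_mono)
  then show "\<bar>exp (- z * cosh t) * cosh (\<nu> * t)\<bar> \<le> exp ((\<nu> + 1)^2 / z) * exp (- 1 * t)"
    by (simp add: exp_add[symmetric])
qed auto

lemma besselK_scaled_ge_integral:
  fixes z \<nu> :: real and g :: "real \<Rightarrow> real"
  assumes "0 < z" "0 \<le> \<nu>" and g: "(g has_integral I) {0..}"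
    and g_le: "\<And>t. 0 \<le> t \<Longrightarrow> g t \<le> exp (- z * (cosh t - 1))"
  shows "I \<le> besselK_scaled \<nu> z"
proof -
  let ?h = "\<lambda>t. exp z * (exp (- z * cosh t) * cosh (\<nu> * t))"
  have "I = integral {0..} g" using g by (simp add: integral_unique)
  also have "\<dots> \<le> integral {0..} ?h"
  proof (rule integral_le[OF has_integral_integrable[OF g]])
    show "?h integrable_on {0..}"
      by (rule integrable_on_mult_right[OF besselK_integrand_integrable[OF assms(1,2)]])
    fix t :: real assume "t \<in> {0..}"
    then have "g t \<le> exp z * exp (- z * cosh t)"
      using g_le by (simp add: exp_add[symmetric] algebra_simps)
    also have "\<dots> \<le> ?h t"
      using mult_left_mono[OF cosh_real_ge_1[of "\<nu> * t"], of "exp z * exp (- z * cosh t)"]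
      by simp
    finally show "g t \<le> ?h t" .
  qed
  also have "\<dots> = besselK_scaled \<nu> z"
    unfolding besselK_scaled_def besselK_def by (rule integral_mult_right)
  finally show ?thesis .
qed

definition kernel_minorant :: "real \<Rightarrow> real" where
  "kernel_minorant x = exp_neg_taylor3 (x^2/2 + x^4/16)"

definition kernel_minorant_primitive :: "real \<Rightarrow> real" where
  "kernel_minorant_primitive x =
     x - x^3/6 + x^5/80 + x^7/672 - x^9/1536 - x^11/11264 - x^13/319488"

lemma kernel_minorant_primitive_deriv:
  "(kernel_minorant_primitive has_real_derivative kernel_minorant x) (at x)"
  unfolding kernel_minorant_primitive_def kernel_minorant_def exp_neg_taylor3_def
  by (auto intro!: derivative_eq_intros simp: field_simps eval_nat_numeral)

lemma kernel_minorant_le_exp: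
  fixes B z t :: real
  assumes "2 \<le> B" "z \<le> B" "0 \<le> t" "sqrt B * t \<le> 7/5"
  shows "kernel_minorant (sqrt B * t) \<le> exp (- z * (cosh t - 1))"
proof -
  define x where "x = sqrt B * t"
  have x_sq: "x^2 = B * t^2" using assms(1) by (simp add: x_def power_mult_distrib)
  have "x^2 \<le> (7/5)^2"
    using assms(1,3,4) by (intro power_mono) (simp_all add: x_def)
  moreover have "2 * t^2 \<le> B * t^2" using assms(1) by (simp add: mult_right_mono)
  ultimately have "t^2 \<le> 1" using x_sq by (simp add: power2_eq_square)
  then have "\<bar>t\<bar> \<le> 1" by (simp add: abs_square_le_1)
  have "B * (cosh t - 1) \<le> B * (t^2/2 + t^4/8)"
    using cosh_minus_one_le[OF \<open>\<bar>t\<bar> \<le> 1\<close>] assms(1) by simp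
  also have "\<dots> = x^2/2 + x^4 / (8 * B)"
    using x_sq assms(1) by (simp add: field_simps power2_eq_square eval_nat_numeral)
  also have "\<dots> \<le> x^2/2 + x^4/16"
    using assms(1) by (intro add_left_mono divide_left_mono) auto
  finally have "kernel_minorant x \<le> exp_neg_taylor3 (B * (cosh t - 1))"
    unfolding kernel_minorant_def by (rule exp_neg_taylor3_antimono)
  also have "\<dots> \<le> exp (- (B * (cosh t - 1)))"
    using cosh_real_ge_1[of t] assms(1) by (intro exp_neg_taylor3_le_exp) simp
  also have "\<dots> \<le> exp (- z * (cosh t - 1))"
    using cosh_real_ge_1[of t] assms(2) mult_right_mono[of z B "cosh t - 1"] by simp
  finally show ?thesis by (simp add: x_def)
qed

lemma kernel_minorant_truncated_has_integral:
  fixes r c :: real assumes "0 < r" "0 \<le> c"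
  shows "((\<lambda>t. if t \<in> {0..c/r} then kernel_minorant (r * t) else 0)
           has_integral kernel_minorant_primitive c / r) {0..}"
proof -
  have "((\<lambda>t. kernel_minorant_primitive (r * t) / r)
          has_real_derivative kernel_minorant (r * t)) (at t)" for t
    using DERIV_cdivide[OF DERIV_chain2[OF kernel_minorant_primitive_deriv
          DERIV_cmult_Id[of r t]], of r] assms(1)
    by simp
  then have "((\<lambda>t. kernel_minorant (r * t)) has_integral
      kernel_minorant_primitive (r * (c/r)) / r - kernel_minorant_primitive (r * 0) / r) {0..c/r}"
    using assms
    by (intro fundamental_theorem_of_calculus)
       (auto simp: has_real_derivative_iff_has_vector_derivative[symmetric]
             intro: has_field_derivative_at_within)
  then have "((\<lambda>t. kernel_minorant (r * t)) has_integral kernel_minorant_primitive c / r) {0..c/r}"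
    using assms(1) by (simp add: kernel_minorant_primitive_def)
  then show ?thesis by (subst has_integral_restrict) auto
qed

lemma besselK_scaled_ge_inverse_sqrt:
  fixes B z \<nu> :: real
  assumes "2 \<le> B" "0 < z" "z \<le> B" "0 \<le> \<nu>"
  shows "1 / sqrt B \<le> besselK_scaled \<nu> z"
proof -
  have r: "0 < sqrt B" using assms(1) by simp
  have "1 / sqrt B \<le> kernel_minorant_primitive (7/5) / sqrt B"
    using r by (intro divide_right_mono)
      (simp_all add: kernel_minorant_primitive_def eval_nat_numeral)
  also have "\<dots> \<le> besselK_scaled \<nu> z"
  proof (rule besselK_scaled_ge_integral[OF assms(2,4)
               kernel_minorant_truncated_has_integral[OF r]])
    fix t :: real assume "0 \<le> t"
    then show "(if t \<in> {0..(7/5) / sqrt B} then kernel_minorant (sqrt B * t) else 0)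
               \<le> exp (- z * (cosh t - 1))"
      using kernel_minorant_le_exp[OF assms(1,3)] r by (simp add: field_simps)
  qed simp
  finally show ?thesis .
qed

theorem proposition5:
  fixes P U L :: int and \<nu> z :: real
  assumes "P \<ge> 1" and "U \<ge> 0" and "real_of_int L \<le> - (real_of_int U + 1) / 2"
    and "\<nu> \<ge> 0" and "0 < z"
    and "z \<le> (1 - 2 powr (- real_of_int P)) * 2 powr (real_of_int U + 1)"
  shows "besselK_scaled \<nu> z \<ge> 2 powr (real_of_int L)"
proof -
  define B where "B = (2::real) powr (real_of_int U + 1)"
  have "2 \<le> B" using assms(2) powr_mono[of 1 "real_of_int U + 1" 2] by (simp add: B_def)
  moreover have "z \<le> B"
  proof -
    have "z \<le> (1 - 2 powr (- real_of_int P)) * B" using assms(6) by (simp add: B_def)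
    moreover have "0 < 2 powr (- real_of_int P) * B" by (simp add: B_def)
    ultimately show ?thesis by (simp add: algebra_simps)
  qed
  moreover have "2 powr (real_of_int L) \<le> 1 / sqrt B"
    using assms(3)
    by (simp add: B_def powr_half_sqrt_powr[symmetric] powr_minus_divide[symmetric]
                  minus_divide_left)
  ultimately show ?thesis
    using besselK_scaled_ge_inverse_sqrt[OF _ assms(5) _ assms(4)] by (meson order_trans)
qed

end
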